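(* Let $\mathbb{R}^n_s$ be $\mathbb{R}^n$ with a non-degenerate symmetric bilinear form of signature $(n-s,s)$, and let $G\subset\mathrm{Iso}(\mathbb{R}^n_s)$ be a real Zariski-closed subgroup of dimension $k$ whose centralizer in $\mathrm{Iso}(\mathbb{R}^n_s)$ acts transitively on $\mathbb{R}^n$. Let $\mathfrak{g}$ be the Lie algebra of $G$ and let $X_1,\dots,X_k$ be a Malcev basis of $\mathfrak{g}$, with $X_i=(A_i,v_i)$. For $p\in\mathbb{R}^n$ put $b_i(p)=A_ip+v_i$. Then the orbit $F_p=G.p$ is the affine subspace $$F_p=p+\mathrm{span}\{b_1(p),\dots,b_k(p)\}$$ and $\dim F_p=k$.
   Context: Affine maps of $\mathbb{R}^n$ are written $(I+A,v)$ (linear part $I+A$, translation $v$), identified with the matrix $\begin{pmatrix}I+A&v\\0&1\end{pmatrix}\in\mathrm{GL}_{n+1}(\mathbb{R})$; elements of $\mathfrak{g}$ are written $(A,v)$, identified with $\begin{pmatrix}A&v\\0&0\end{pmatrix}$. $G$ is a unipotent group. A Malcev basis of $\mathfrak{g}$ is a basis $X_1,\dots,X_k$ such that every $g\in G$ can be written uniquely as $g=\exp(t_1X_1+\dots+t_kX_k)$ with real $t_1,\dots,t_k$. *)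

theory Defs
  imports "HOL-Analysis.Analysis"
begin

text \<open>Affine maps and elements of the
Lie algebra are identified with (n+1)x(n+1) matrices indexed by 'n option, where the index
None plays the role of the extra (last) coordinate.\<close>

type_synonym ('n) augmat = "real^('n option)^('n option)"

definition aff_mat :: "real^'n^'n \<Rightarrow> real^'n \<Rightarrow> ('n::finite) augmat" where
  "aff_mat M v = (\<chi> i j. case i of
      Some a \<Rightarrow> (case j of Some b \<Rightarrow> M$a$b | None \<Rightarrow> v$a)
    | None \<Rightarrow> (case j of Some b \<Rightarrow> 0 | None \<Rightarrow> 1))"

definition lie_mat :: "real^'n^'n \<Rightarrow> real^'n \<Rightarrow> ('n::finite) augmat" where
  "lie_mat A v = (\<chi> i j. case i of
      Some a \<Rightarrow> (case j of Some b \<Rightarrow> A$a$b | None \<Rightarrow> v$a)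
    | None \<Rightarrow> 0)"

definition ext_pt :: "real^'n \<Rightarrow> real^('n option)" where
  "ext_pt p = (\<chi> i. case i of Some a \<Rightarrow> p$a | None \<Rightarrow> 1)"

definition act :: "('n::finite) augmat \<Rightarrow> real^'n \<Rightarrow> real^'n" where
  "act g p = (\<chi> a. (g *v ext_pt p) $ Some a)"

definition has_signature :: "real^'n^'n \<Rightarrow> nat \<Rightarrow> bool" where
  "has_signature B s \<longleftrightarrow> transpose B = B \<and>
     (\<exists>(P::real^'n^'n) d. invertible P \<and> (\<forall>i. d i = 1 \<or> d i = -1) \<and> card {i. d i = -1} = s \<and>
            transpose P ** B ** P = (\<chi> i j. if i = j then d i else 0))"

definition iso_group :: "real^'n^'n \<Rightarrow> ('n::finite) augmat set" where
  "iso_group B = {aff_mat M v | M v. transpose M ** B ** M = B}"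

fun matpow :: "('n::finite) augmat \<Rightarrow> nat \<Rightarrow> ('n::finite) augmat" where
  "matpow X 0 = mat 1"
| "matpow X (Suc m) = X ** matpow X m"

definition mexp :: "('n::finite) augmat \<Rightarrow> ('n::finite) augmat" where
  "mexp X = (\<chi> i j. \<Sum>m. (matpow X m)$i$j / fact m)"

definition is_subgroup :: "('n::finite) augmat set \<Rightarrow> bool" where
  "is_subgroup G \<longleftrightarrow> mat 1 \<in> G \<and> (\<forall>g\<in>G. \<forall>h\<in>G. g ** h \<in> G) \<and>
     (\<forall>g\<in>G. invertible g \<and> matrix_inv g \<in> G)"

inductive_set poly_fun :: "(real^'i^'j \<Rightarrow> real) set" where
  const: "(\<lambda>M. c) \<in> poly_fun"
| coord: "(\<lambda>M. M$j$i) \<in> poly_fun"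
| add: "f \<in> poly_fun \<Longrightarrow> g \<in> poly_fun \<Longrightarrow> (\<lambda>M. f M + g M) \<in> poly_fun"
| mult: "f \<in> poly_fun \<Longrightarrow> g \<in> poly_fun \<Longrightarrow> (\<lambda>M. f M * g M) \<in> poly_fun"

definition zariski_closed :: "(real^'i^'j) set \<Rightarrow> bool" where
  "zariski_closed S \<longleftrightarrow> (\<exists>P \<subseteq> poly_fun. S = {M. \<forall>f\<in>P. f M = 0})"

definition unipotent_group :: "('n::finite) augmat set \<Rightarrow> bool" where
  "unipotent_group G \<longleftrightarrow> (\<forall>g\<in>G. matpow (g - mat 1) CARD('n option) = 0)"

definition lie_algebra :: "('n::finite) augmat set \<Rightarrow> ('n::finite) augmat set" where
  "lie_algebra G = {X. \<forall>t::real. mexp (t *\<^sub>R X) \<in> G}"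

definition malcev_basis :: "('n::finite) augmat set \<Rightarrow> ('n::finite) augmat list \<Rightarrow> bool" where
  "malcev_basis G Xs \<longleftrightarrow> distinct Xs \<and> independent (set Xs) \<and>
     span (set Xs) = lie_algebra G \<and>
     (\<forall>g\<in>G. \<exists>!ts::real list. length ts = length Xs \<and>
        g = mexp (\<Sum>i<length Xs. (ts!i) *\<^sub>R (Xs!i)))"

definition orbit :: "('n::finite) augmat set \<Rightarrow> real^'n \<Rightarrow> (real^'n) set" where
  "orbit G p = (\<lambda>g. act g p) ` G"

end

theory Submission
  imports Defs
begin

text \<open>Let \<open>g = (I + A, u) \<in> G\<close> and \<open>q \<in> \<real>\<^sup>n\<close>. An element \<open>c = (N, q)\<close> of the
centralizer with \<open>c 0 = q\<close> gives \<open>g q - q = c (g 0) - c 0 = N u\<close>, so the displacement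
\<open>q \<mapsto> A q + u\<close> has constant length for the form. Polarizing, the image of \<open>A\<close> is totally
isotropic and orthogonal to \<open>u\<close>; as \<open>A\<close> is also skew for the form, nondegeneracy gives
\<open>A\<^sup>2 = 0\<close> and \<open>A u = 0\<close>, i.e. \<open>(g - 1)\<^sup>2 = 0\<close>. Differentiating \<open>exp (t X) \<in> G\<close> at \<open>t = 0\<close>
then yields \<open>X\<^sup>2 = 0\<close> for \<open>X\<close> in the Lie algebra \<open>L\<close>, so \<open>exp X = 1 + X\<close> and
\<open>G.p = p + {X p | X \<in> L}\<close>. Finally stabilizers are trivial, since an element fixing \<open>p\<close>
commutes with a transitive family and hence fixes every point; so \<open>X \<mapsto> X p\<close> is injective
on \<open>L\<close> and the orbit has dimension \<open>k\<close>.\<close>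

lemma sum_UNIV_option:
  "(\<Sum>x\<in>(UNIV::'a::finite option set). f x) = f None + (\<Sum>a\<in>UNIV. f (Some a))"
proof -
  have "(\<Sum>x\<in>(UNIV::'a option set). f x) = f None + (\<Sum>x\<in>range Some. f x)"
    by (simp add: UNIV_option_conv)
  also have "(\<Sum>x\<in>range Some. f x) = (\<Sum>a\<in>UNIV. f (Some a))"
    by (subst sum.reindex) auto
  finally show ?thesis .
qed

lemma aff_mat_mult_ext_pt: "aff_mat M u *v ext_pt x = ext_pt (M *v x + u)"
  by (auto simp: vec_eq_iff aff_mat_def ext_pt_def matrix_vector_mult_def sum_UNIV_option
      split: option.splits)

lemma act_aff_mat: "act (aff_mat M u) x = M *v x + u"
  unfolding act_def aff_mat_mult_ext_pt by (simp add: ext_pt_def vec_eq_iff)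

lemma act_mult_aff_mat: "act (c ** aff_mat M u) x = act c (act (aff_mat M u) x)"
  by (simp only: act_aff_mat)
    (simp add: act_def matrix_vector_mul_assoc[symmetric] aff_mat_mult_ext_pt)

lemma act_add: "act (X + Y) p = act X p + act Y p"
  by (simp add: act_def vec_eq_iff matrix_vector_mult_add_rdistrib)

lemma act_scaleR: "act (c *\<^sub>R X) p = c *\<^sub>R act X p"
  by (simp add: act_def vec_eq_iff scaleR_matrix_vector_assoc[symmetric])

lemma act_mat_1: "act (mat 1) p = p"
  by (simp add: act_def ext_pt_def vec_eq_iff)

lemma act_linear: "linear (\<lambda>X. act X p)"
  by (rule linearI) (simp_all only: act_add act_scaleR)

lemma act_lie_mat: "act (lie_mat A v) p = A *v p + v"
  by (simp add: vec_eq_iff act_def lie_mat_def ext_pt_def matrix_vector_mult_def sum_UNIV_option)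

lemma lie_mat_mult: "lie_mat A v ** lie_mat A' v' = lie_mat (A ** A') (A *v v')"
  by (auto simp: vec_eq_iff lie_mat_def matrix_matrix_mult_def matrix_vector_mult_def
      sum_UNIV_option split: option.splits)

lemma lie_mat_zero: "lie_mat 0 0 = 0"
  by (auto simp: vec_eq_iff lie_mat_def split: option.splits)

lemma aff_mat_minus_mat_1: "aff_mat M u - mat 1 = lie_mat (M - mat 1) u"
  by (auto simp: vec_eq_iff lie_mat_def aff_mat_def mat_def split: option.splits)

lemma aff_mat_mat_1: "aff_mat (mat 1) 0 = mat 1"
  by (auto simp: vec_eq_iff aff_mat_def mat_def split: option.splits)

lemma has_signature_nondegenerate:
  assumes "has_signature B s" and "B *v y = 0"
  shows "y = 0"
proof -
  obtain P :: "real^'a^'a" and d where P: "invertible P" and d: "\<forall>i. d i = 1 \<or> d i = -1"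
    and D: "transpose P ** B ** P = (\<chi> i j. if i = j then d i else 0)"
    using assms(1) unfolding has_signature_def by blast
  obtain P' where P': "P ** P' = mat 1" using P invertible_right_inverse by blast
  define z where "z = P' *v y"
  have Pz: "P *v z = y" by (simp add: z_def matrix_vector_mul_assoc P')
  have "(\<chi> i j. if i = j then d i else 0) *v z = 0"
    by (metis D Pz assms(2) matrix_vector_mul_assoc matrix_vector_mult_0_right)
  hence "d i * z $ i = 0" for i
    by (auto simp: vec_eq_iff matrix_vector_mult_def if_distrib[where f="\<lambda>x. x * _"] cong: if_cong)
  hence "z = 0" using d by (metis mult_eq_0_iff vec_eq_iff zero_index zero_neq_neg_one zero_neq_one)
  thus ?thesis using Pz by simp
qed

lemma form_commute:
  fixes B :: "real^'n^'n"
  assumes "transpose B = B"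
  shows "x \<bullet> (B *v y) = y \<bullet> (B *v x)"
  by (metis assms dot_lmul_matrix inner_commute vector_transpose_matrix)

lemma form_isometry:
  fixes B :: "real^'n^'n"
  assumes "transpose M ** B ** M = B"
  shows "(M *v x) \<bullet> (B *v (M *v y)) = x \<bullet> (B *v y)"
proof -
  have "(M *v x) \<bullet> (B *v (M *v y)) = x \<bullet> (transpose M *v (B *v (M *v y)))"
    by (metis dot_lmul_matrix inner_commute vector_transpose_matrix)
  also have "\<dots> = x \<bullet> ((transpose M ** B ** M) *v y)"
    by (simp add: matrix_vector_mul_assoc matrix_mul_assoc)
  finally show ?thesis using assms by simp
qed

lemmas form_distribs =
  inner_add_left inner_add_right inner_minus_left inner_minus_right
  matrix_vector_right_distrib linear_neg[OF matrix_vector_mul_linear]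

lemma const_displacement_isotropic:
  fixes A B :: "real^'n^'n"
  assumes sym: "transpose B = B"
    and const: "\<And>q. (A *v q + u) \<bullet> (B *v (A *v q + u)) = u \<bullet> (B *v u)"
  shows "(A *v x) \<bullet> (B *v (A *v y)) = 0" and "u \<bullet> (B *v (A *v x)) = 0"
proof -
  have plus: "(A *v q) \<bullet> (B *v (A *v q)) + 2 * (u \<bullet> (B *v (A *v q))) = 0" for q
    using const[of q] form_commute[OF sym, of "A *v q" u] by (simp add: form_distribs)
  have minus: "(A *v q) \<bullet> (B *v (A *v q)) - 2 * (u \<bullet> (B *v (A *v q))) = 0" for q
    using plus[of "- q"] by (simp add: form_distribs)
  have "(A *v q) \<bullet> (B *v (A *v q)) = 0" for q
    using plus[of q] minus[of q] by linarith
  from this[of "x + y"] this[of x] this[of y] show "(A *v x) \<bullet> (B *v (A *v y)) = 0"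
    using form_commute[OF sym, of "A *v x" "A *v y"] by (simp add: form_distribs)
  show "u \<bullet> (B *v (A *v x)) = 0"
    using plus[of x] minus[of x] by linarith
qed

lemma const_displacement_square_zero:
  fixes A B :: "real^'n^'n"
  assumes sym: "transpose B = B" and nondeg: "\<And>y. B *v y = 0 \<Longrightarrow> y = 0"
    and iso: "transpose (mat 1 + A) ** B ** (mat 1 + A) = B"
    and const: "\<And>q. (A *v q + u) \<bullet> (B *v (A *v q + u)) = u \<bullet> (B *v u)"
  shows "A ** A = 0" and "A *v u = 0"
proof -
  note isotropic = const_displacement_isotropic[OF sym const]
  have skew: "x \<bullet> (B *v (A *v y)) = - ((A *v x) \<bullet> (B *v y))" for x y
    using form_isometry[OF iso, of x y] isotropic(1)[of x y]
    by (simp add: matrix_vector_mult_add_rdistrib form_distribs)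
  have orthogonal_all: "z = 0" if "\<And>x. x \<bullet> (B *v z) = 0" for z
    using nondeg that[of "B *v z"] by simp
  have "A *v (A *v y) = 0" for y
  proof (rule orthogonal_all)
    show "x \<bullet> (B *v (A *v (A *v y))) = 0" for x
      using skew[of x "A *v y"] isotropic(1)[of x y] by simp
  qed
  thus "A ** A = 0"
    by (simp add: matrix_eq matrix_vector_mul_assoc[symmetric])
  show "A *v u = 0"
  proof (rule orthogonal_all)
    show "x \<bullet> (B *v (A *v u)) = 0" for x
      using skew[of x u] form_commute[OF sym, of "A *v x" u] isotropic(2)[of x] by simp
  qed
qed

definition centralizer_transitive :: "real^'n^'n \<Rightarrow> ('n::finite) augmat set \<Rightarrow> bool" where
  "centralizer_transitive B G \<longleftrightarrow>
     (\<forall>q r. \<exists>c\<in>iso_group B. (\<forall>g\<in>G. c ** g = g ** c) \<and> act c q = r)"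

lemma centralizer_transitive_displacement:
  assumes trans: "centralizer_transitive B G"
    and g: "g \<in> G" "g = aff_mat M u"
  shows "\<exists>N. transpose N ** B ** N = B \<and> (M - mat 1) *v q + u = N *v u"
proof -
  obtain c where c: "c \<in> iso_group B" "\<forall>g\<in>G. c ** g = g ** c" "act c 0 = q"
    using trans unfolding centralizer_transitive_def by blast
  obtain N w where cN: "c = aff_mat N w" and iso: "transpose N ** B ** N = B"
    using c(1) by (auto simp: iso_group_def)
  have "act g q = act (g ** c) 0" using c(3) cN by (simp add: act_mult_aff_mat)
  also have "\<dots> = act (c ** g) 0" using c(2) g(1) by simp
  also have "\<dots> = N *v u + w" using g(2) cN by (simp add: act_mult_aff_mat act_aff_mat)
  finally have "M *v q + u = N *v u + w" using g(2) by (simp add: act_aff_mat)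
  moreover have "q = w" using c(3) cN by (simp add: act_aff_mat)
  ultimately show ?thesis
    using iso by (auto simp: matrix_vector_mult_diff_rdistrib algebra_simps)
qed

lemma centralizer_transitive_square_zero:
  assumes sig: "has_signature B s" and GI: "G \<subseteq> iso_group B"
    and trans: "centralizer_transitive B G" and g: "g \<in> G"
  shows "(g - mat 1) ** (g - mat 1) = 0"
proof -
  obtain M u where gM: "g = aff_mat M u" and iso: "transpose M ** B ** M = B"
    using g GI by (auto simp: iso_group_def)
  have sym: "transpose B = B" using sig by (simp add: has_signature_def)
  have "((M - mat 1) *v q + u) \<bullet> (B *v ((M - mat 1) *v q + u)) = u \<bullet> (B *v u)" for q
  proof -
    obtain N where "transpose N ** B ** N = B" and "(M - mat 1) *v q + u = N *v u"
      using centralizer_transitive_displacement[OF trans g gM] by blast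
    thus ?thesis by (simp add: form_isometry)
  qed
  from const_displacement_square_zero[OF sym has_signature_nondegenerate[OF sig] _ this]
  have "(M - mat 1) ** (M - mat 1) = 0" "(M - mat 1) *v u = 0"
    using iso by simp_all
  thus ?thesis by (simp add: gM aff_mat_minus_mat_1 lie_mat_mult lie_mat_zero)
qed

lemma centralizer_transitive_stabilizer_trivial:
  assumes GI: "G \<subseteq> iso_group B" and trans: "centralizer_transitive B G"
    and g: "g \<in> G" and fix_p: "act g p = p"
  shows "g = mat 1"
proof -
  obtain M u where gM: "g = aff_mat M u" using g GI by (auto simp: iso_group_def)
  have fixes_all: "M *v q + u = q" for q
  proof -
    obtain c where c: "c \<in> iso_group B" "\<forall>g\<in>G. c ** g = g ** c" "act c p = q"
      using trans unfolding centralizer_transitive_def by blast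
    obtain N w where cN: "c = aff_mat N w" using c(1) by (auto simp: iso_group_def)
    have "act g q = act (g ** c) p" using c(3) cN by (simp add: act_mult_aff_mat)
    also have "\<dots> = act (c ** g) p" using c(2) g by simp
    also have "\<dots> = q" using gM fix_p c(3) by (simp add: act_mult_aff_mat)
    finally show ?thesis using gM by (simp add: act_aff_mat)
  qed
  have "u = 0" using fixes_all[of 0] by simp
  moreover have "M = mat 1" using fixes_all \<open>u = 0\<close> by (simp add: matrix_eq)
  ultimately show ?thesis using gM aff_mat_mat_1 by simp
qed

lemma matpow_scaleR: "matpow (t *\<^sub>R X) m = t ^ m *\<^sub>R matpow X m"
proof -
  have scaleR_right: "Y ** (c *\<^sub>R Z) = c *\<^sub>R (Y ** Z)" for Y Z :: "'n::finite augmat" and c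
    by (simp add: vec_eq_iff matrix_matrix_mult_def sum_distrib_left mult_ac)
  show ?thesis by (induction m) (simp_all add: scaleR_right scalar_matrix_assoc[symmetric])
qed

definition entry_bound :: "('n::finite) augmat \<Rightarrow> real" where
  "entry_bound X = (\<Sum>i\<in>UNIV. \<Sum>k\<in>UNIV. \<bar>X$i$k\<bar>) + 1"

lemma row_sum_le_entry_bound: "(\<Sum>k\<in>UNIV. \<bar>X$i$k\<bar>) \<le> entry_bound X"
proof -
  have "(\<Sum>k\<in>UNIV. \<bar>X$i$k\<bar>) \<le> (\<Sum>i\<in>UNIV. \<Sum>k\<in>UNIV. \<bar>X$i$k\<bar>)"
    by (rule member_le_sum) (auto intro: sum_nonneg)
  thus ?thesis by (simp add: entry_bound_def)
qed

lemma entry_bound_ge_1: "entry_bound X \<ge> 1"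
  by (simp add: entry_bound_def sum_nonneg)

lemma matpow_entry_le: "\<bar>matpow X m $ i $ j\<bar> \<le> entry_bound X ^ m"
proof (induction m arbitrary: i j)
  case 0
  thus ?case by (simp add: mat_def)
next
  case (Suc m)
  have "\<bar>matpow X (Suc m) $ i $ j\<bar> = \<bar>\<Sum>k\<in>UNIV. X$i$k * matpow X m $ k $ j\<bar>"
    by (simp add: matrix_matrix_mult_def)
  also have "\<dots> \<le> (\<Sum>k\<in>UNIV. \<bar>X$i$k\<bar> * entry_bound X ^ m)"
    by (rule order_trans[OF sum_abs]) (auto intro!: sum_mono mult_left_mono Suc simp: abs_mult)
  also have "\<dots> = (\<Sum>k\<in>UNIV. \<bar>X$i$k\<bar>) * entry_bound X ^ m"
    by (simp add: sum_distrib_right)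
  also have "\<dots> \<le> entry_bound X * entry_bound X ^ m"
    using row_sum_le_entry_bound[of X i] entry_bound_ge_1[of X] by (intro mult_right_mono) auto
  finally show ?case by simp
qed

text \<open>\<open>mexp_quotient X i j t\<close> is the \<open>(i, j)\<close> entry of \<open>(exp (t X) - 1) / t\<close>, extended
  by \<open>X\<close> at \<open>t = 0\<close>.\<close>

definition mexp_quotient :: "('n::finite) augmat \<Rightarrow> 'n option \<Rightarrow> 'n option \<Rightarrow> real \<Rightarrow> real" where
  "mexp_quotient X i j t = (\<Sum>m. matpow X (Suc m) $ i $ j / fact (Suc m) * t ^ m)"

lemma summable_mexp_quotient:
  "summable (\<lambda>m. matpow X (Suc m) $ i $ j / fact (Suc m) * t ^ m)"
proof (rule summable_comparison_test'[where N = 0])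
  let ?K = "entry_bound X"
  show "summable (\<lambda>m. ?K * (inverse (fact m) * (?K * \<bar>t\<bar>) ^ m))"
    by (intro summable_mult summable_exp)
  fix m :: nat
  have "norm (matpow X (Suc m) $ i $ j / fact (Suc m) * t ^ m)
      = \<bar>matpow X (Suc m) $ i $ j\<bar> / fact (Suc m) * \<bar>t\<bar> ^ m"
    by (simp add: abs_mult power_abs)
  also have "\<dots> \<le> ?K ^ Suc m / fact m * \<bar>t\<bar> ^ m"
  proof (intro mult_right_mono frac_le)
    show "\<bar>matpow X (Suc m) $ i $ j\<bar> \<le> ?K ^ Suc m" by (rule matpow_entry_le)
    show "(fact m :: real) \<le> fact (Suc m)" by (rule fact_mono) simp
  qed (use entry_bound_ge_1[of X] in auto)
  also have "\<dots> = ?K * (inverse (fact m) * (?K * \<bar>t\<bar>) ^ m)"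
    by (simp add: power_mult_distrib field_simps)
  finally show "norm (matpow X (Suc m) $ i $ j / fact (Suc m) * t ^ m)
      \<le> ?K * (inverse (fact m) * (?K * \<bar>t\<bar>) ^ m)" .
qed

lemma mexp_scaleR_minus_mat_1:
  "(mexp (t *\<^sub>R X) - mat 1) $ i $ j = t * mexp_quotient X i j t"
proof -
  define a where "a m = t ^ m * matpow X m $ i $ j / fact m" for m
  have a_Suc: "a (Suc m) = t * (matpow X (Suc m) $ i $ j / fact (Suc m) * t ^ m)" for m
    by (simp add: a_def)
  have "summable (\<lambda>m. a (Suc m))"
    unfolding a_Suc by (intro summable_mult summable_mexp_quotient)
  hence "summable a" by (simp add: summable_Suc_iff)
  have "mexp (t *\<^sub>R X) $ i $ j = suminf a"
    by (simp add: mexp_def matpow_scaleR a_def[abs_def])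
  also have "\<dots> = a 0 + (\<Sum>m. a (Suc m))"
    using suminf_split_head[OF \<open>summable a\<close>] by simp
  also have "(\<Sum>m. a (Suc m)) = t * mexp_quotient X i j t"
    unfolding a_Suc mexp_quotient_def by (rule suminf_mult[OF summable_mexp_quotient])
  finally show ?thesis by (simp add: a_def)
qed

lemma mexp_quotient_tendsto: "(mexp_quotient X i j \<longlongrightarrow> X $ i $ j) (at 0)"
proof -
  have "isCont (mexp_quotient X i j) 0"
    unfolding mexp_quotient_def[abs_def]
    by (rule isCont_powser_converges_everywhere[OF summable_mexp_quotient])
  moreover have "mexp_quotient X i j 0 = X $ i $ j"
    unfolding mexp_quotient_def powser_zero by simp
  ultimately show ?thesis by (simp add: isCont_def)
qed

lemma lie_algebra_square_zero:
  assumes sq: "\<And>g. g \<in> G \<Longrightarrow> (g - mat 1) ** (g - mat 1) = 0"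
    and X: "X \<in> lie_algebra G"
  shows "X ** X = 0"
proof -
  have "(X ** X) $ i $ j = 0" for i j
  proof -
    let ?h = "\<lambda>t. \<Sum>k\<in>UNIV. mexp_quotient X i k t * mexp_quotient X k j t"
    have lim: "(?h \<longlongrightarrow> (X ** X) $ i $ j) (at 0)"
      unfolding matrix_matrix_mult_def by (simp, intro tendsto_intros mexp_quotient_tendsto)
    have "?h t = 0" if "t \<noteq> 0" for t :: real
    proof -
      have "mexp (t *\<^sub>R X) \<in> G" using X by (simp add: lie_algebra_def)
      hence "((mexp (t *\<^sub>R X) - mat 1) ** (mexp (t *\<^sub>R X) - mat 1)) $ i $ j = 0"
        using sq by simp
      hence "t ^ 2 * ?h t = 0"
        by (simp add: matrix_matrix_mult_def mexp_scaleR_minus_mat_1 sum_distrib_left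
            power2_eq_square mult_ac del: vector_minus_component)
      thus ?thesis using that by simp
    qed
    hence "\<forall>\<^sub>F t in at 0. ?h t = 0"
      by (auto simp: eventually_at_filter)
    with lim have "((\<lambda>t::real. 0::real) \<longlongrightarrow> (X ** X) $ i $ j) (at 0)"
      by (rule Lim_transform_eventually)
    thus ?thesis by (simp add: tendsto_const_iff)
  qed
  thus ?thesis by (simp add: vec_eq_iff)
qed

lemma mexp_square_zero:
  assumes "X ** X = 0"
  shows "mexp X = mat 1 + X"
proof -
  have vanish: "matpow X (Suc (Suc m)) = 0" for m
    by (induction m) (simp_all add: assms matrix_mul_assoc[symmetric])
  have "(\<Sum>m. matpow X m $ i $ j / fact m) = (\<Sum>m\<in>{0,1}. matpow X m $ i $ j / fact m)" for i j
  proof (rule suminf_finite)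
    fix m :: nat
    assume "m \<notin> {0,1}"
    hence "m = Suc (Suc (m - 2))" by auto
    thus "matpow X m $ i $ j / fact m = 0" by (metis vanish zero_index divide_eq_0_iff)
  qed simp
  thus ?thesis by (simp add: mexp_def vec_eq_iff)
qed

lemma lie_algebra_mexp_mem: "X \<in> lie_algebra G \<Longrightarrow> mexp X \<in> G"
  unfolding lie_algebra_def by (metis (mono_tags) mem_Collect_eq scaleR_one)

lemma orbit_eq_lie_algebra:
  assumes exp_eq: "\<And>X. X \<in> lie_algebra G \<Longrightarrow> mexp X = mat 1 + X"
    and exp_onto: "G \<subseteq> mexp ` lie_algebra G"
  shows "orbit G p = (\<lambda>X. p + act X p) ` lie_algebra G"
proof -
  have "G = (\<lambda>X. mat 1 + X) ` lie_algebra G"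
    using exp_onto exp_eq lie_algebra_mexp_mem[of _ G] by (force simp: image_iff)
  hence "orbit G p = (\<lambda>g. act g p) ` (\<lambda>X. mat 1 + X) ` lie_algebra G"
    unfolding orbit_def by (rule arg_cong)
  thus ?thesis by (simp add: image_image act_add act_mat_1)
qed

lemma malcev_basis_exp_onto:
  assumes "malcev_basis G Ys"
  shows "G \<subseteq> mexp ` lie_algebra G"
proof
  fix g assume "g \<in> G"
  then obtain ts :: "real list" where "g = mexp (\<Sum>i<length Ys. (ts!i) *\<^sub>R (Ys!i))"
    using assms unfolding malcev_basis_def by blast
  moreover have "(\<Sum>i<length Ys. (ts!i) *\<^sub>R (Ys!i)) \<in> span (set Ys)"
    by (intro span_sum span_scale span_base) simp
  ultimately show "g \<in> mexp ` lie_algebra G"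
    using assms unfolding malcev_basis_def by blast
qed

lemma centralizer_transitive_mexp_eq:
  assumes "has_signature B s" and "G \<subseteq> iso_group B" and "centralizer_transitive B G"
    and "X \<in> lie_algebra G"
  shows "mexp X = mat 1 + X"
  using centralizer_transitive_square_zero[OF assms(1-3)] assms(4)
  by (rule mexp_square_zero[OF lie_algebra_square_zero])

lemma lie_algebra_act_eq_0:
  assumes sig: "has_signature B s" and GI: "G \<subseteq> iso_group B"
    and trans: "centralizer_transitive B G"
    and Z: "Z \<in> lie_algebra G" "act Z p = 0"
  shows "Z = 0"
proof -
  have "mat 1 + Z \<in> G"
    using lie_algebra_mexp_mem[OF Z(1)] centralizer_transitive_mexp_eq[OF sig GI trans Z(1)] by simp
  moreover have "act (mat 1 + Z) p = p" using Z(2) by (simp add: act_add act_mat_1)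
  ultimately have "mat 1 + Z = mat 1"
    by (rule centralizer_transitive_stabilizer_trivial[OF GI trans])
  thus ?thesis by simp
qed

theorem proposition4p1:
  fixes B :: "real^'n^'n" and s k :: nat
    and G :: "'n augmat set"
    and Xs :: "((real^'n^'n) \<times> (real^'n)) list"
    and p :: "real^'n"
  assumes "s \<le> CARD('n)"
    and "has_signature B s"
    and "G \<subseteq> iso_group B" and "is_subgroup G" and "zariski_closed G"
    and "unipotent_group G"
    and "dim (lie_algebra G) = k"
    and "\<forall>q r. \<exists>c\<in>iso_group B. (\<forall>g\<in>G. c ** g = g ** c) \<and> act c q = r"
    and "length Xs = k"
    and "malcev_basis G (map (\<lambda>(A, v). lie_mat A v) Xs)"
  shows "orbit G p = (\<lambda>w. p + w) ` span ((\<lambda>(A, v). A *v p + v) ` set Xs)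
     \<and> aff_dim (orbit G p) = int k"
proof -
  let ?b = "\<lambda>(A, v). A *v p + v"
  define Ys where "Ys = map (\<lambda>(A, v). lie_mat A v) Xs"
  have trans: "centralizer_transitive B G"
    using assms(8) unfolding centralizer_transitive_def .
  note exp_eq = centralizer_transitive_mexp_eq[OF assms(2,3) trans]
  have lie_span: "lie_algebra G = span (set Ys)"
    using assms(10) unfolding malcev_basis_def Ys_def by blast
  have b_image: "(\<lambda>X. act X p) ` set Ys = ?b ` set Xs"
    unfolding Ys_def set_map image_image
    by (rule image_cong) (auto simp: act_lie_mat split: prod.split)
  have act_span: "(\<lambda>X. act X p) ` lie_algebra G = span (?b ` set Xs)"
    unfolding lie_span b_image[symmetric] by (rule span_linear_image[OF act_linear, symmetric])
  have orbit: "orbit G p = (\<lambda>w. p + w) ` span (?b ` set Xs)"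
    unfolding act_span[symmetric] image_image
    by (rule orbit_eq_lie_algebra[OF exp_eq malcev_basis_exp_onto[OF assms(10)]])
  have "inj_on (\<lambda>X. act X p) (span (set Ys))"
    using lie_algebra_act_eq_0[OF assms(2,3) trans, of _ p]
    unfolding lie_span linear_inj_on_iff_eq_0[OF act_linear subspace_span] by blast
  hence "dim (?b ` set Xs) = dim (set Ys)"
    unfolding b_image[symmetric] by (rule dim_image_eq[OF act_linear])
  also have "\<dots> = k"
    using assms(7) lie_span by (metis dim_span)
  finally have "aff_dim (span (?b ` set Xs)) = int k"
    by (simp add: aff_dim_subspace dim_span)
  moreover have "aff_dim (orbit G p) = aff_dim (span (?b ` set Xs))"
    unfolding orbit by (rule aff_dim_translation_eq)
  ultimately show ?thesis
    using orbit by simp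
qed

end
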